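(* Let $m\ge 2$ and $\alpha\in[0,1]$. Define $w_k$ and $t_k$ by the recursion given in the context. There exists a deterministic voting rule $f$ such that for every $k\in[m-1]$ and every election $\mathcal E=(N,A,\vec\sigma)$ with $m$ alternatives whose profile $\vec\sigma$ is moderate-up-to-$k$, $$\mathsf{dist}_\alpha(f(\vec\sigma),\mathcal E)\le 2+\max(\alpha,t_k).$$
   Context: An election $\mathcal E=(N,A,\vec\sigma)$ has a finite set $N$ of $n$ agents, a set $A$ of $m$ alternatives, and a profile $\vec\sigma=(\sigma_1,\dots,\sigma_n)$. Each $\sigma_i=(\pi_i,\Join_i)$ consists of a bijection $\pi_i:[m]\to A$, where $\pi_i(1)$ is agent $i$'s most preferred alternative, and a map $\Join_i:[m-1]\to\{\succ,\succ\!\!\succ\}$. A metric $d$ on $N\cup A$ is nonnegative and symmetric, satisfies the triangle inequality, and has $d(x,x)=0$. The profile $\vec\sigma$ is $\alpha$-consistent with $d$ (mandatory elicitation) if for every agent $i$ and every $j\in[m-1]$: - if $\Join_i(j)=\,\succ$, then $d(i,\pi_i(j+1))\ge d(i,\pi_i(j))>\alpha\, d(i,\pi_i(j+1))$; - if $\Join_i(j)=\,\succ\!\!\succ$, then $d(i,\pi_i(j))\le\alpha\, d(i,\pi_i(j+1))$. Let $\mathrm{sc}_d(a)=\sum_{i\in N}d(i,a)$ and $\mathsf{dist}_\alpha(a,\mathcal E)=\sup_d \mathrm{sc}_d(a)/\min_{b\in A}\mathrm{sc}_d(b)$, the supremum over metrics $d$ with which $\vec\sigma$ is $\alpha$-consistent.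 A preference $\sigma=(\pi,\Join)$ is moderate-up-to-$k$ if $\Join(k+1)=\,\succ\!\!\succ$ and $\Join(i)=\,\succ$ for all $i\in[k]$. If $\Join$ contains no $\succ\!\!\succ$, the preference is moderate-up-to-$(m-1)$. A profile is moderate-up-to-$k$ if every agent's preference is. Define - $w_1=\frac{\alpha+1}{3\alpha+1}$ and $t_1=\frac{1-\alpha}{3\alpha+1}$; - for $k>1$: $w_k=1-\frac{2\alpha}{(1-\alpha)t_{k-1}+2w_{k-1}+2\alpha}$ and $t_k=w_k+(1-w_k)t_{k-1}$. *)

theory Defs
  imports Main "HOL-Library.Extended_Real"
begin

(* Profiles: agent i's ranking is prf i :: nat => 'a on positions 1..m,
   and J i j = True encodes  \<Join>_i(j) = \<succ>\<succ>  (strong), False encodes \<succ>. *)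

definition valid_election :: "nat \<Rightarrow> 'n set \<Rightarrow> 'a set \<Rightarrow> ('n \<Rightarrow> nat \<Rightarrow> 'a) \<Rightarrow> bool" where
  "valid_election m N A prf \<longleftrightarrow> finite N \<and> N \<noteq> {} \<and> finite A \<and> card A = m \<and>
     (\<forall>i\<in>N. bij_betw (prf i) {1..m} A)"

definition is_metric_on :: "'x set \<Rightarrow> ('x \<Rightarrow> 'x \<Rightarrow> real) \<Rightarrow> bool" where
  "is_metric_on S d \<longleftrightarrow> (\<forall>x\<in>S. \<forall>y\<in>S. d x y \<ge> 0 \<and> d x y = d y x) \<and> (\<forall>x\<in>S. d x x = 0) \<and>
     (\<forall>x\<in>S. \<forall>y\<in>S. \<forall>z\<in>S. d x z \<le> d x y + d y z)"

definition alpha_consistent ::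
  "real \<Rightarrow> nat \<Rightarrow> 'n set \<Rightarrow> ('n \<Rightarrow> nat \<Rightarrow> 'a) \<Rightarrow> ('n \<Rightarrow> nat \<Rightarrow> bool)
     \<Rightarrow> ('n + 'a \<Rightarrow> 'n + 'a \<Rightarrow> real) \<Rightarrow> bool" where
  "alpha_consistent \<alpha> m N prf J d \<longleftrightarrow>
     (\<forall>i\<in>N. \<forall>j\<in>{1..m-1}.
        (\<not> J i j \<longrightarrow> d (Inl i) (Inr (prf i (j+1))) \<ge> d (Inl i) (Inr (prf i j)) \<and>
                       d (Inl i) (Inr (prf i j)) > \<alpha> * d (Inl i) (Inr (prf i (j+1)))) \<and>
        (J i j \<longrightarrow> d (Inl i) (Inr (prf i j)) \<le> \<alpha> * d (Inl i) (Inr (prf i (j+1)))))"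

definition social_cost :: "'n set \<Rightarrow> ('n + 'a \<Rightarrow> 'n + 'a \<Rightarrow> real) \<Rightarrow> 'a \<Rightarrow> real" where
  "social_cost N d a = (\<Sum>i\<in>N. d (Inl i) (Inr a))"

definition distortion ::
  "real \<Rightarrow> nat \<Rightarrow> 'n set \<Rightarrow> 'a set \<Rightarrow> ('n \<Rightarrow> nat \<Rightarrow> 'a) \<Rightarrow> ('n \<Rightarrow> nat \<Rightarrow> bool) \<Rightarrow> 'a \<Rightarrow> ereal" where
  "distortion \<alpha> m N A prf J a =
     (SUP d\<in>{d. is_metric_on (Inl ` N \<union> Inr ` A) d \<and> alpha_consistent \<alpha> m N prf J d}.
        ereal (social_cost N d a / (MIN b\<in>A. social_cost N d b)))"

(* moderate-up-to-k: \<Join>(1..k) = \<succ>, and \<Join>(k+1) = \<succ>\<succ> when k+1 \<le> m-1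
   (for k = m-1 this means no \<succ>\<succ> at all) *)
definition moderate_up_to :: "nat \<Rightarrow> nat \<Rightarrow> (nat \<Rightarrow> bool) \<Rightarrow> bool" where
  "moderate_up_to m k Ji \<longleftrightarrow> (\<forall>j\<in>{1..k}. \<not> Ji j) \<and> (k + 1 \<le> m - 1 \<longrightarrow> Ji (k+1))"

(* (w_k, t_k) for k \<ge> 1; value at 0 is an irrelevant dummy *)
fun wt :: "real \<Rightarrow> nat \<Rightarrow> real \<times> real" where
  "wt \<alpha> 0 = (0, 0)"
| "wt \<alpha> (Suc 0) = ((\<alpha> + 1) / (3 * \<alpha> + 1), (1 - \<alpha>) / (3 * \<alpha> + 1))"
| "wt \<alpha> (Suc (Suc k)) =
     (let w = fst (wt \<alpha> (Suc k)); t = snd (wt \<alpha> (Suc k));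
          w' = 1 - 2 * \<alpha> / ((1 - \<alpha>) * t + 2 * w + 2 * \<alpha>)
      in (w', w' + (1 - w') * t))"

definition w_seq :: "real \<Rightarrow> nat \<Rightarrow> real" where "w_seq \<alpha> k = fst (wt \<alpha> k)"
definition t_seq :: "real \<Rightarrow> nat \<Rightarrow> real" where "t_seq \<alpha> k = snd (wt \<alpha> k)"

end

theory Submission
  imports Defs
begin

(* Every agent distributes one unit of score over its top k+1 positions: w_k to its favourite and
   the remaining 1 - w_k, recursively as for k - 1, over positions 2, ..., k+1. The total score
   equals the number of agents, so the agents can veto it away fractionally, each spending its unit
   on its least preferred alternatives first; the winner a is a surviving alternative, and every
   agent that vetoes some c ranks a at least as high as c. Against any b, the triangle inequality
   through the vetoing agents gives sc(a) <= sc(b) + sum_c score(c) d(b, c), and agent i's share of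
   the last sum is bounded through i by sum_l q_k(l) (d(i, b) + d(i, pi_i(l))). For a
   moderate-up-to-k agent, positions beyond k+1 carry no weight, d(i, pi_i(k+1)) <= alpha
   d(i, pi_i(k+2)), and consecutive distances among the top k+1 have ratio above alpha; an induction
   on k, for which the recursion of (w_k, t_k) is tailored, bounds that share by
   (1 + max(alpha, t_k)) d(i, b). *)

section \<open>The weights w_k and t_k\<close>

(* Starting at (w_0, t_0) = (1, -1), one step of the recursion of wt gives (w_1, t_1). *)
fun wt_ext :: "real \<Rightarrow> nat \<Rightarrow> real \<times> real" where
  "wt_ext \<alpha> 0 = (1, -1)"
| "wt_ext \<alpha> (Suc k) =
     (let w = fst (wt_ext \<alpha> k); t = snd (wt_ext \<alpha> k);
          w' = 1 - 2 * \<alpha> / ((1 - \<alpha>) * t + 2 * w + 2 * \<alpha>)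
      in (w', w' + (1 - w') * t))"

definition w_ext :: "real \<Rightarrow> nat \<Rightarrow> real" where "w_ext \<alpha> k = fst (wt_ext \<alpha> k)"
definition t_ext :: "real \<Rightarrow> nat \<Rightarrow> real" where "t_ext \<alpha> k = snd (wt_ext \<alpha> k)"

lemma w_ext_0 [simp]: "w_ext \<alpha> 0 = 1"
  and t_ext_0 [simp]: "t_ext \<alpha> 0 = -1"
  by (simp_all add: w_ext_def t_ext_def)

lemma w_ext_Suc:
  "w_ext \<alpha> (Suc k) = 1 - 2 * \<alpha> / ((1 - \<alpha>) * t_ext \<alpha> k + 2 * w_ext \<alpha> k + 2 * \<alpha>)"
  by (simp add: w_ext_def t_ext_def Let_def)

lemma t_ext_Suc: "t_ext \<alpha> (Suc k) = w_ext \<alpha> (Suc k) + (1 - w_ext \<alpha> (Suc k)) * t_ext \<alpha> k"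
  by (simp add: w_ext_def t_ext_def Let_def)

declare wt_ext.simps(2) [simp del]

lemma wt_ext_eq_wt:
  assumes "0 \<le> \<alpha>" and "1 \<le> k"
  shows "wt_ext \<alpha> k = wt \<alpha> k"
  using assms(2)
proof (induction k rule: nat_induct_at_least)
  case base
  have "3 * \<alpha> + 1 \<noteq> 0" using assms(1) by simp
  then show ?case by (simp add: field_simps wt_ext.simps Let_def)
next
  case (Suc k)
  then obtain j where "k = Suc j" by (cases k) auto
  with Suc show ?case by (simp add: Let_def wt_ext.simps)
qed

lemma t_seq_eq_t_ext: "0 \<le> \<alpha> \<Longrightarrow> 1 \<le> k \<Longrightarrow> t_seq \<alpha> k = t_ext \<alpha> k"
  by (simp add: t_seq_def t_ext_def wt_ext_eq_wt)

lemma wt_ext_bounds: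
  assumes "0 \<le> \<alpha>" and "\<alpha> \<le> 1"
  shows "0 \<le> w_ext \<alpha> k \<and> w_ext \<alpha> k \<le> 1 \<and> -1 \<le> t_ext \<alpha> k \<and> t_ext \<alpha> k \<le> 1
         \<and> 1 \<le> t_ext \<alpha> k + 2 * w_ext \<alpha> k"
proof (induction k)
  case 0
  then show ?case by simp
next
  case (Suc k)
  define W T where "W = w_ext \<alpha> k" and "T = t_ext \<alpha> k"
  define D where "D = (1 - \<alpha>) * T + 2 * W + 2 * \<alpha>"
  define u where "u = 2 * \<alpha> / D"
  have T: "-1 \<le> T" "T \<le> 1" and TW: "1 \<le> T + 2 * W"
    using Suc unfolding W_def T_def by auto
  have "\<alpha> * T \<le> \<alpha>" using mult_left_mono[OF T(2) assms(1)] by simp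
  then have D: "1 + \<alpha> \<le> D" unfolding D_def using TW by (simp add: algebra_simps)
  then have "0 < D" using assms(1) by simp
  have u: "0 \<le> u" "u \<le> 1"
    unfolding u_def using \<open>0 < D\<close> D assms by (simp_all add: divide_le_eq)
  have uT: "- u \<le> u * T" "u * T \<le> u"
    using mult_left_mono[OF T(1) u(1)] mult_left_mono[OF T(2) u(1)] by simp_all
  have "2 * \<alpha> * (3 - T) \<le> 2 * D" unfolding D_def using TW assms(2) by (simp add: algebra_simps)
  then have "u * (3 - T) \<le> 2" unfolding u_def using \<open>0 < D\<close> by (simp add: field_simps)
  moreover have "w_ext \<alpha> (Suc k) = 1 - u"
    unfolding w_ext_Suc u_def D_def W_def T_def ..
  moreover from this have "t_ext \<alpha> (Suc k) = 1 - u + u * T"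
    unfolding t_ext_Suc T_def by simp
  ultimately show ?case using u uT by (simp add: algebra_simps)
qed

(* The recursion defining w_(k+1) is chosen exactly so that this identity holds. *)
lemma wt_ext_identity:
  assumes "0 \<le> \<alpha>" and "\<alpha> \<le> 1"
  shows "(1 - w_ext \<alpha> (Suc k)) * (t_ext \<alpha> k + 2 * w_ext \<alpha> k)
         = \<alpha> * (t_ext \<alpha> (Suc k) + w_ext \<alpha> (Suc k))"
proof -
  define W T where "W = w_ext \<alpha> k" and "T = t_ext \<alpha> k"
  define D where "D = (1 - \<alpha>) * T + 2 * W + 2 * \<alpha>"
  define u where "u = 2 * \<alpha> / D"
  have "T \<le> 1" "1 \<le> T + 2 * W" using wt_ext_bounds[OF assms, of k] unfolding W_def T_def by auto
  moreover have "\<alpha> * T \<le> \<alpha>" using mult_left_mono[OF \<open>T \<le> 1\<close> assms(1)] by simp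
  ultimately have "D \<noteq> 0" unfolding D_def using assms(1) by (simp add: algebra_simps)
  then have "u * D = 2 * \<alpha>" unfolding u_def by simp
  then have "u * (T + 2 * W) = \<alpha> * (2 - 2 * u + u * T)"
    unfolding D_def by (simp add: algebra_simps)
  moreover have "w_ext \<alpha> (Suc k) = 1 - u"
    unfolding w_ext_Suc u_def D_def W_def T_def ..
  moreover from this have "t_ext \<alpha> (Suc k) = 1 - u + u * T"
    unfolding t_ext_Suc T_def by simp
  ultimately show ?thesis unfolding W_def[symmetric] T_def[symmetric] by simp
qed

section \<open>Positional scores\<close>

fun rank_weight :: "real \<Rightarrow> nat \<Rightarrow> nat \<Rightarrow> real" where
  "rank_weight \<alpha> 0 l = (if l = 1 then 1 else 0)"
| "rank_weight \<alpha> (Suc k) 0 = 0"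
| "rank_weight \<alpha> (Suc k) (Suc 0) = w_ext \<alpha> (Suc k)"
| "rank_weight \<alpha> (Suc k) (Suc (Suc l)) = (1 - w_ext \<alpha> (Suc k)) * rank_weight \<alpha> k (Suc l)"

lemma rank_weight_1 [simp]: "rank_weight \<alpha> k (Suc 0) = w_ext \<alpha> k"
  by (cases k) simp_all

lemma rank_weight_Suc_Suc:
  "1 \<le> l \<Longrightarrow> rank_weight \<alpha> (Suc k) (Suc l) = (1 - w_ext \<alpha> (Suc k)) * rank_weight \<alpha> k l"
  by (cases l) simp_all

lemma rank_weight_nonneg:
  assumes "0 \<le> \<alpha>" and "\<alpha> \<le> 1"
  shows "0 \<le> rank_weight \<alpha> k l"
  using assms by (induction \<alpha> k l rule: rank_weight.induct) (auto simp: wt_ext_bounds)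

lemma rank_weight_eq_0: "k + 1 < l \<Longrightarrow> rank_weight \<alpha> k l = 0"
  by (induction \<alpha> k l rule: rank_weight.induct) simp_all

lemma sum_rank_weight_Suc:
  "(\<Sum>l=1..Suc n. rank_weight \<alpha> (Suc k) l * x l)
   = w_ext \<alpha> (Suc k) * x 1 + (1 - w_ext \<alpha> (Suc k)) * (\<Sum>l=1..n. rank_weight \<alpha> k l * x (Suc l))"
proof -
  have split: "(\<Sum>l=1..Suc n. f l) = f 1 + (\<Sum>l=1..n. f (Suc l))" for f :: "nat \<Rightarrow> real"
    by (simp add: sum.atLeast_Suc_atMost flip: sum.shift_bounds_cl_Suc_ivl)
  show ?thesis
    unfolding split[of "\<lambda>l. rank_weight \<alpha> (Suc k) l * x l"] sum_distrib_left
    by (simp, rule sum.cong) (auto simp: rank_weight_Suc_Suc)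
qed

lemma sum_rank_weight: "k + 1 \<le> n \<Longrightarrow> (\<Sum>l=1..n. rank_weight \<alpha> k l) = 1"
proof (induction k arbitrary: n)
  case 0
  then have "{1..n} = insert 1 {2..n}" by auto
  then show ?case by simp
next
  case (Suc k)
  then obtain n' where "n = Suc n'" "k + 1 \<le> n'" by (cases n) auto
  with Suc.IH show ?case using sum_rank_weight_Suc[where n = n' and x = "\<lambda>_. 1"] by simp
qed

lemma sum_rank_weight_truncate:
  "k + 1 \<le> n \<Longrightarrow> (\<Sum>l=1..n. rank_weight \<alpha> k l * x l) = (\<Sum>l=1..k+1. rank_weight \<alpha> k l * x l)"
  by (rule sum.mono_neutral_right) (auto simp: rank_weight_eq_0)

lemma sum_rank_weight_le:
  assumes "0 \<le> \<alpha>" and "\<alpha> \<le> 1"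
    and "\<forall>l\<in>{1..k}. x l \<le> x (Suc l) \<and> \<alpha> * x (Suc l) \<le> x l"
    and "p \<in> {1..k+1}"
  shows "(\<Sum>l=1..k+1. rank_weight \<alpha> k l * x l) \<le> (t_ext \<alpha> k + 2 * rank_weight \<alpha> k p) * x p"
  using assms(3,4)
proof (induction k arbitrary: x p)
  case 0
  then show ?case by simp
next
  case (Suc k)
  define w t where "w = w_ext \<alpha> (Suc k)" and "t = t_ext \<alpha> (Suc k)"
  define y where "y l = x (Suc l)" for l
  have w: "0 \<le> w" "w \<le> 1" and "1 \<le> t + 2 * w"
    using wt_ext_bounds[OF assms(1,2), of "Suc k"] unfolding w_def t_def by auto
  have y: "\<forall>l\<in>{1..k}. y l \<le> y (Suc l) \<and> \<alpha> * y (Suc l) \<le> y l"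
    using Suc.prems(1) unfolding y_def by auto
  have split: "(\<Sum>l=1..Suc k+1. rank_weight \<alpha> (Suc k) l * x l)
      = w * x 1 + (1 - w) * (\<Sum>l=1..k+1. rank_weight \<alpha> k l * y l)"
    using sum_rank_weight_Suc[where n = "k+1"] unfolding w_def y_def by simp
  consider "p = 1" | p' where "p = Suc p'" "p' \<in> {1..k+1}"
    using Suc.prems(2) by (cases p) force+
  then show ?case
  proof cases
    case 1
    have "(1 - w) * (\<Sum>l=1..k+1. rank_weight \<alpha> k l * y l)
        \<le> (1 - w) * ((t_ext \<alpha> k + 2 * w_ext \<alpha> k) * y 1)"
      using Suc.IH[OF y, of 1] w by (intro mult_left_mono) simp_all
    also have "\<dots> = ((1 - w) * (t_ext \<alpha> k + 2 * w_ext \<alpha> k)) * x 2"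
      by (simp add: y_def numeral_2_eq_2 mult.assoc)
    also have "\<dots> = (t + w) * (\<alpha> * x 2)"
      unfolding w_def t_def wt_ext_identity[OF assms(1,2)] by (simp add: ac_simps)
    also have "\<dots> \<le> (t + w) * x 1"
      using Suc.prems(1) \<open>1 \<le> t + 2 * w\<close> w by (intro mult_left_mono) (auto simp: numeral_2_eq_2)
    finally show ?thesis using split 1 by (simp add: w_def t_def algebra_simps)
  next
    case 2
    have "x 1 \<le> x p"
    proof (rule lift_Suc_mono_le_ivl[of "{1..Suc k}"])
      show "\<And>n. n \<in> {1..Suc k} \<Longrightarrow> x n \<le> x (Suc n)" using Suc.prems(1) by blast
    qed (use 2 in auto)
    moreover have "(\<Sum>l=1..k+1. rank_weight \<alpha> k l * y l)
        \<le> (t_ext \<alpha> k + 2 * rank_weight \<alpha> k p') * y p'"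
      by (rule Suc.IH[OF y 2(2)])
    ultimately have "w * x 1 + (1 - w) * (\<Sum>l=1..k+1. rank_weight \<alpha> k l * y l)
        \<le> w * x p + (1 - w) * ((t_ext \<alpha> k + 2 * rank_weight \<alpha> k p') * y p')"
      using w by (intro add_mono mult_left_mono) simp_all
    also have "\<dots> = (t + 2 * rank_weight \<alpha> (Suc k) p) * x p"
      using 2 by (simp add: t_def w_def y_def t_ext_Suc rank_weight_Suc_Suc algebra_simps)
    finally show ?thesis using split by (simp add: t_def)
  qed
qed

(* The distances x l = d(i, \<pi>_i(l)) of an agent i with a moderate-up-to-k preference. *)
definition moderate_sequence :: "real \<Rightarrow> nat \<Rightarrow> nat \<Rightarrow> (nat \<Rightarrow> real) \<Rightarrow> bool" where
  "moderate_sequence \<alpha> m k x \<longleftrightarrow>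
     (\<forall>l\<in>{1..m}. 0 \<le> x l) \<and> (\<forall>l\<in>{1..m-1}. x l \<le> x (Suc l)) \<and>
     (\<forall>l\<in>{1..k}. \<alpha> * x (Suc l) \<le> x l) \<and> (k + 1 \<le> m - 1 \<longrightarrow> x (k+1) \<le> \<alpha> * x (k+2))"

lemma moderate_sequence_mono:
  assumes "moderate_sequence \<alpha> m k x" and "1 \<le> l" and "l \<le> l'" and "l' \<le> m"
  shows "x l \<le> x l'"
proof (rule lift_Suc_mono_le_ivl[of "{1..m-1}"])
  show "\<And>n. n \<in> {1..m-1} \<Longrightarrow> x n \<le> x (Suc n)"
    using assms(1) unfolding moderate_sequence_def by blast
qed (use assms(2-4) in auto)

lemma sum_rank_weight_detour_le:
  assumes "0 \<le> \<alpha>" and "\<alpha> \<le> 1" and "k + 1 \<le> m"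
    and x: "moderate_sequence \<alpha> m k x" and p: "p \<in> {1..m}"
  shows "(\<Sum>l=1..m. rank_weight \<alpha> k l * (if l = p then 0 else x p + x l))
         \<le> (1 + max \<alpha> (t_ext \<alpha> k)) * x p"
proof -
  define S where "S = (\<Sum>l=1..k+1. rank_weight \<alpha> k l * x l)"
  have "(\<Sum>l=1..m. rank_weight \<alpha> k l * (if l = p then 0 else x p + x l))
      = (\<Sum>l=1..m. rank_weight \<alpha> k l * (x p + x l)
           - (if l = p then rank_weight \<alpha> k p * (2 * x p) else 0))"
    by (rule sum.cong) auto
  also have "\<dots> = x p + S - rank_weight \<alpha> k p * (2 * x p)"
    using p sum_rank_weight[OF assms(3)] sum_rank_weight_truncate[OF assms(3)]
    by (simp add: sum_subtractf sum.distrib distrib_left S_def flip: sum_distrib_right)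
  finally have sum_eq: "(\<Sum>l=1..m. rank_weight \<alpha> k l * (if l = p then 0 else x p + x l))
      = x p + S - rank_weight \<alpha> k p * (2 * x p)" .
  have "0 \<le> x p" using x p unfolding moderate_sequence_def by auto
  then have max_bounds: "\<alpha> * x p \<le> max \<alpha> (t_ext \<alpha> k) * x p" "t_ext \<alpha> k * x p \<le> max \<alpha> (t_ext \<alpha> k) * x p"
    by (simp_all add: mult_right_mono)
  show ?thesis
  proof (cases "p \<le> k + 1")
    case True
    have "\<forall>l\<in>{1..k}. x l \<le> x (Suc l) \<and> \<alpha> * x (Suc l) \<le> x l"
      using x assms(3) unfolding moderate_sequence_def by auto
    then have "S \<le> (t_ext \<alpha> k + 2 * rank_weight \<alpha> k p) * x p"
      unfolding S_def using sum_rank_weight_le[OF assms(1,2)] True p by auto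
    then show ?thesis
      using sum_eq max_bounds by (simp add: algebra_simps)
  next
    case False
    have "S \<le> (\<Sum>l=1..k+1. rank_weight \<alpha> k l * x (k+1))"
      unfolding S_def using moderate_sequence_mono[OF x] rank_weight_nonneg[OF assms(1,2)] assms(3)
      by (intro sum_mono mult_left_mono) auto
    also have "\<dots> = x (k+1)"
      using sum_rank_weight[of k "k+1" \<alpha>] by (simp flip: sum_distrib_right)
    also have "\<dots> \<le> \<alpha> * x (k+2)" using x False p unfolding moderate_sequence_def by auto
    also have "\<dots> \<le> \<alpha> * x p"
      using moderate_sequence_mono[OF x] False p assms(1) by (intro mult_left_mono) auto
    finally have "S \<le> \<alpha> * x p" .
    then show ?thesis
      using sum_eq rank_weight_eq_0[of k p] False max_bounds by (simp add: algebra_simps)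
  qed
qed

section \<open>Fractional vetoes\<close>

lemma exists_bottom_filling:
  fixes r :: "'a \<Rightarrow> 'b::linorder" and s :: "'a \<Rightarrow> real"
  assumes "finite B" and "\<forall>c\<in>B. 0 \<le> s c" and "0 \<le> \<mu>" and "\<mu> \<le> sum s B"
  shows "\<exists>v. (\<forall>c\<in>B. 0 \<le> v c \<and> v c \<le> s c) \<and> sum v B = \<mu> \<and>
             (\<forall>c\<in>B. \<forall>c'\<in>B. 0 < v c \<longrightarrow> r c < r c' \<longrightarrow> v c' = s c')"
  using assms
proof (induction B arbitrary: \<mu> rule: finite_ranking_induct[where f = r])
  case empty
  then show ?case by (intro exI[of _ "\<lambda>_. 0"]) auto
next
  case (insert w B)
  show ?case
  proof (cases "w \<in> B")
    case True
    with insert show ?thesis by (simp add: insert_absorb)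
  next
    case False
    with insert.hyps(1) have sum_insert: "sum f (insert w B) = f w + sum f B" for f :: "'a \<Rightarrow> real"
      by simp
    show ?thesis
    proof (cases "\<mu> \<le> s w")
      case True
      have "sum (\<lambda>c. if c = w then \<mu> else 0) (insert w B) = \<mu>" using insert.hyps(1) by simp
      with True insert.hyps(2) insert.prems(1,2) show ?thesis
        by (intro exI[of _ "\<lambda>c. if c = w then \<mu> else 0"]) (auto simp: not_le[symmetric])
    next
      case False
      then obtain v where v: "\<forall>c\<in>B. 0 \<le> v c \<and> v c \<le> s c" "sum v B = \<mu> - s w"
          "\<forall>c\<in>B. \<forall>c'\<in>B. 0 < v c \<longrightarrow> r c < r c' \<longrightarrow> v c' = s c'"
        using insert.IH[of "\<mu> - s w"] insert.prems sum_insert by auto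
      have "sum (v(w := s w)) B = sum v B" using \<open>w \<notin> B\<close> by (intro sum.cong) auto
      then have "sum (v(w := s w)) (insert w B) = \<mu>" using sum_insert v(2) by simp
      moreover have "\<forall>c\<in>insert w B. \<forall>c'\<in>insert w B.
          0 < (v(w := s w)) c \<longrightarrow> r c < r c' \<longrightarrow> (v(w := s w)) c' = s c'"
      proof (intro ballI impI)
        fix c c' assume c: "c \<in> insert w B" "c' \<in> insert w B" "0 < (v(w := s w)) c" "r c < r c'"
        show "(v(w := s w)) c' = s c'"
        proof (cases "c' = w")
          case False
          with c(2) have "c' \<in> B" by simp
          then have "r c' \<le> r w" by (rule insert.hyps(2))
          with c(4) have "c \<noteq> w" by auto
          with c(1,3) have "c \<in> B" "0 < v c" by auto
          with v(3) \<open>c' \<in> B\<close> c(4) have "v c' = s c'" by blast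
          with False show ?thesis by simp
        qed simp
      qed
      moreover have "\<forall>c\<in>insert w B. 0 \<le> (v(w := s w)) c \<and> (v(w := s w)) c \<le> s c"
        using v(1) insert.prems(1) by simp
      ultimately show ?thesis by blast
    qed
  qed
qed

definition fractional_veto ::
  "'n set \<Rightarrow> 'a set \<Rightarrow> ('n \<Rightarrow> 'a \<Rightarrow> 'b::linorder) \<Rightarrow> ('a \<Rightarrow> real) \<Rightarrow> ('n \<Rightarrow> 'a \<Rightarrow> real) \<Rightarrow> 'a \<Rightarrow> bool"
where
  "fractional_veto N A r s V a \<longleftrightarrow>
     (\<forall>i\<in>N. \<forall>c\<in>A. 0 \<le> V i c) \<and> (\<forall>i\<in>N. sum (V i) A = 1) \<and>
     (\<forall>c\<in>A. (\<Sum>i\<in>N. V i c) = s c) \<and> (\<forall>i\<in>N. \<forall>c\<in>A. 0 < V i c \<longrightarrow> r i a \<le> r i c)"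

lemma fractional_veto_singleton:
  fixes r :: "'n \<Rightarrow> 'a \<Rightarrow> 'b::linorder"
  assumes "finite A" and "\<forall>c\<in>A. 0 \<le> s c" and "sum s A = 1"
  shows "\<exists>a\<in>A. 0 < s a \<and> fractional_veto {i} A r s (\<lambda>_. s) a"
proof -
  define S where "S = {c\<in>A. 0 < s c}"
  have "S \<noteq> {}"
  proof
    assume "S = {}"
    then have "\<forall>c\<in>A. s c = 0" using assms(2) unfolding S_def by force
    then show False using assms(3) by simp
  qed
  moreover have "finite S" using assms(1) unfolding S_def by simp
  ultimately have "Min (r i ` S) \<in> r i ` S" by simp
  then obtain a where "a \<in> S" and a_Min: "r i a = Min (r i ` S)" by auto
  moreover have "\<forall>c\<in>S. r i a \<le> r i c" unfolding a_Min using \<open>finite S\<close> by simp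
  ultimately show ?thesis
    using assms(2,3) unfolding fractional_veto_def S_def by auto
qed

lemma fractional_veto_insert:
  assumes "finite N" and "i \<notin> N"
    and v: "\<forall>c\<in>A. 0 \<le> v c" "sum v A = 1"
      "\<forall>c\<in>A. \<forall>c'\<in>A. 0 < v c \<longrightarrow> r i c < r i c' \<longrightarrow> v c' = s c'"
    and "a \<in> A" and "v a < s a"
    and V: "fractional_veto N A r (\<lambda>c. s c - v c) V a"
  shows "fractional_veto (insert i N) A r s (V(i := v)) a"
  unfolding fractional_veto_def
proof (intro conjI ballI impI)
  fix j c assume "j \<in> insert i N" "c \<in> A"
  then show "0 \<le> (V(i := v)) j c" using v(1) V \<open>i \<notin> N\<close> unfolding fractional_veto_def by auto
next
  fix j assume "j \<in> insert i N"
  then show "sum ((V(i := v)) j) A = 1" using v(2) V \<open>i \<notin> N\<close> unfolding fractional_veto_def by auto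
next
  fix c assume "c \<in> A"
  have "(\<Sum>j\<in>N. (V(i := v)) j c) = (\<Sum>j\<in>N. V j c)"
    using \<open>i \<notin> N\<close> by (intro sum.cong) auto
  then have "(\<Sum>j\<in>insert i N. (V(i := v)) j c) = v c + (\<Sum>j\<in>N. V j c)"
    using assms(1,2) by simp
  then show "(\<Sum>j\<in>insert i N. (V(i := v)) j c) = s c"
    using V \<open>c \<in> A\<close> unfolding fractional_veto_def by simp
next
  fix j c assume j: "j \<in> insert i N" and c: "c \<in> A" and pos: "0 < (V(i := v)) j c"
  show "r j a \<le> r j c"
  proof (cases "j = i")
    case True
    show ?thesis
    proof (rule ccontr)
      assume "\<not> r j a \<le> r j c"
      with True have "r i c < r i a" by simp
      moreover from pos True have "0 < v c" by simp
      ultimately have "v a = s a" using v(3) c \<open>a \<in> A\<close> by blast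
      then show False using \<open>v a < s a\<close> by simp
    qed
  next
    case False
    then show ?thesis using V j c pos unfolding fractional_veto_def by auto
  qed
qed

lemma exists_fractional_veto:
  fixes r :: "'n \<Rightarrow> 'a \<Rightarrow> 'b::linorder"
  assumes "finite N" and "N \<noteq> {}" and "finite A"
    and "\<forall>c\<in>A. 0 \<le> s c" and "sum s A = real (card N)"
  shows "\<exists>a\<in>A. 0 < s a \<and> (\<exists>V. fractional_veto N A r s V a)"
  using assms(1,2,4,5)
proof (induction N arbitrary: s rule: finite_ne_induct)
  case (singleton i)
  then have "sum s A = 1" by simp
  with fractional_veto_singleton[OF assms(3) singleton.prems(1), where i = i and r = r]
  show ?case by blast
next
  case (insert i N)
  have "1 \<le> sum s A" using insert.prems(2) insert.hyps by (simp add: card_insert_if)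
  then obtain v where v: "\<forall>c\<in>A. 0 \<le> v c \<and> v c \<le> s c" "sum v A = 1"
      "\<forall>c\<in>A. \<forall>c'\<in>A. 0 < v c \<longrightarrow> r i c < r i c' \<longrightarrow> v c' = s c'"
    using exists_bottom_filling[OF assms(3) insert.prems(1) zero_le_one, where r = "r i"] by blast
  have v_nonneg: "\<forall>c\<in>A. 0 \<le> v c" using v(1) by blast
  have "\<forall>c\<in>A. 0 \<le> s c - v c" using v(1) by simp
  moreover have "(\<Sum>c\<in>A. s c - v c) = real (card N)"
    using insert.prems(2) insert.hyps v(2) by (simp add: sum_subtractf card_insert_if)
  ultimately have "\<exists>a\<in>A. 0 < s a - v a \<and> (\<exists>V. fractional_veto N A r (\<lambda>c. s c - v c) V a)"
    by (rule insert.IH)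
  then obtain a V where a: "a \<in> A" "v a < s a" and V: "fractional_veto N A r (\<lambda>c. s c - v c) V a"
    by auto
  have "0 < s a" using a v_nonneg by fastforce
  with a show ?case
    using fractional_veto_insert[OF insert.hyps(1,3) v_nonneg v(2,3) a V] by blast
qed

section \<open>The voting rule\<close>

definition position :: "nat \<Rightarrow> (nat \<Rightarrow> 'a) \<Rightarrow> 'a \<Rightarrow> nat" where
  "position m \<sigma> c = the_inv_into {1..m} \<sigma> c"

context
  fixes m :: nat and \<sigma> :: "nat \<Rightarrow> 'a" and A :: "'a set"
  assumes bij: "bij_betw \<sigma> {1..m} A"
begin

lemma position_in: "c \<in> A \<Longrightarrow> position m \<sigma> c \<in> {1..m}"
  using bij unfolding position_def by (metis bij_betw_def bij_betw_the_inv_into bij_betw_apply)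

lemma ranking_position: "c \<in> A \<Longrightarrow> \<sigma> (position m \<sigma> c) = c"
  using bij unfolding position_def by (metis bij_betw_def f_the_inv_into_f)

lemma position_ranking: "l \<in> {1..m} \<Longrightarrow> position m \<sigma> (\<sigma> l) = l"
  using bij unfolding position_def bij_betw_def by (simp add: the_inv_into_f_f)

lemma sum_by_position: "(\<Sum>c\<in>A. f (position m \<sigma> c) c) = (\<Sum>l=1..m. f l (\<sigma> l))"
  using sum.reindex_bij_betw[OF bij, of "\<lambda>c. f (position m \<sigma> c) c"] position_ranking by simp

end

definition score :: "real \<Rightarrow> nat \<Rightarrow> nat \<Rightarrow> 'n set \<Rightarrow> ('n \<Rightarrow> nat \<Rightarrow> 'a) \<Rightarrow> 'a \<Rightarrow> real" where
  "score \<alpha> m k N \<pi> c = (\<Sum>i\<in>N. rank_weight \<alpha> k (position m (\<pi> i) c))"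

lemma score_nonneg: "0 \<le> \<alpha> \<Longrightarrow> \<alpha> \<le> 1 \<Longrightarrow> 0 \<le> score \<alpha> m k N \<pi> c"
  unfolding score_def by (intro sum_nonneg rank_weight_nonneg)

lemma sum_score:
  assumes "valid_election m N A \<pi>" and "k + 1 \<le> m"
  shows "sum (score \<alpha> m k N \<pi>) A = real (card N)"
proof -
  have "sum (score \<alpha> m k N \<pi>) A = (\<Sum>i\<in>N. \<Sum>c\<in>A. rank_weight \<alpha> k (position m (\<pi> i) c))"
    unfolding score_def by (rule sum.swap)
  also have "\<dots> = (\<Sum>i\<in>N. 1)"
  proof (rule sum.cong)
    fix i assume "i \<in> N"
    then have bij: "bij_betw (\<pi> i) {1..m} A" using assms(1) unfolding valid_election_def by blast
    show "(\<Sum>c\<in>A. rank_weight \<alpha> k (position m (\<pi> i) c)) = 1"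
      using sum_by_position[OF bij, where f = "\<lambda>l c. rank_weight \<alpha> k l"]
        sum_rank_weight[OF assms(2)] by simp
  qed simp
  finally show ?thesis by simp
qed

lemma moderate_up_to_unique:
  assumes "moderate_up_to m k J" and "moderate_up_to m k' J" and "k \<le> m - 1" and "k' \<le> m - 1"
  shows "k = k'"
proof (rule ccontr)
  assume "k \<noteq> k'"
  then consider "k < k'" | "k' < k" by linarith
  then show False
    by cases (use assms in \<open>auto simp: moderate_up_to_def\<close>)
qed

(* The rule must read the common level k off the profile; the fallback 1 is arbitrary. *)
definition moderation_level :: "nat \<Rightarrow> 'n set \<Rightarrow> ('n \<Rightarrow> nat \<Rightarrow> bool) \<Rightarrow> nat" where
  "moderation_level m N J =
     (if \<exists>k\<in>{1..m-1}. \<forall>i\<in>N. moderate_up_to m k (J i)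
      then SOME k. k \<in> {1..m-1} \<and> (\<forall>i\<in>N. moderate_up_to m k (J i)) else 1)"

lemma moderation_level_in:
  assumes "2 \<le> m"
  shows "moderation_level m N J \<in> {1..m-1}"
proof (cases "\<exists>k\<in>{1..m-1}. \<forall>i\<in>N. moderate_up_to m k (J i)")
  case True
  then have "\<exists>k. k \<in> {1..m-1} \<and> (\<forall>i\<in>N. moderate_up_to m k (J i))" by blast
  from someI_ex[OF this] True show ?thesis unfolding moderation_level_def by simp
next
  case False
  with assms show ?thesis unfolding moderation_level_def if_not_P[OF False] by simp
qed

lemma moderation_level_eq:
  assumes "N \<noteq> {}" and "k \<in> {1..m-1}" and "\<forall>i\<in>N. moderate_up_to m k (J i)"
  shows "moderation_level m N J = k"
proof -
  obtain i where "i \<in> N" using assms(1) by blast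
  have ex: "\<exists>k. k \<in> {1..m-1} \<and> (\<forall>i\<in>N. moderate_up_to m k (J i))" using assms(2,3) by blast
  have "(SOME k. k \<in> {1..m-1} \<and> (\<forall>i\<in>N. moderate_up_to m k (J i))) = k"
  proof (rule someI2_ex[OF ex])
    fix k' assume "k' \<in> {1..m-1} \<and> (\<forall>i\<in>N. moderate_up_to m k' (J i))"
    then show "k' = k" using moderate_up_to_unique[of m k' "J i" k] assms(2,3) \<open>i \<in> N\<close> by auto
  qed
  then show ?thesis unfolding moderation_level_def using assms(2,3) by auto
qed

definition veto_rule ::
  "real \<Rightarrow> nat \<Rightarrow> 'n set \<Rightarrow> 'a set \<Rightarrow> ('n \<Rightarrow> nat \<Rightarrow> 'a) \<Rightarrow> ('n \<Rightarrow> nat \<Rightarrow> bool) \<Rightarrow> 'a"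
where
  "veto_rule \<alpha> m N A \<pi> J =
     (SOME a. a \<in> A \<and>
        (\<exists>V. fractional_veto N A (\<lambda>i. position m (\<pi> i)) (score \<alpha> m (moderation_level m N J) N \<pi>) V a))"

lemma veto_rule_spec:
  assumes "2 \<le> m" and "0 \<le> \<alpha>" and "\<alpha> \<le> 1" and "valid_election m N A \<pi>"
  shows "veto_rule \<alpha> m N A \<pi> J \<in> A \<and>
         (\<exists>V. fractional_veto N A (\<lambda>i. position m (\<pi> i)) (score \<alpha> m (moderation_level m N J) N \<pi>) V
                (veto_rule \<alpha> m N A \<pi> J))"
proof -
  let ?s = "score \<alpha> m (moderation_level m N J) N \<pi>"
  have "moderation_level m N J + 1 \<le> m" using moderation_level_in[OF assms(1), of N J] by auto
  then have "sum ?s A = real (card N)" by (rule sum_score[OF assms(4)])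
  then have "\<exists>a\<in>A. 0 < ?s a \<and> (\<exists>V. fractional_veto N A (\<lambda>i. position m (\<pi> i)) ?s V a)"
    using assms(4) score_nonneg[OF assms(2,3), of m "moderation_level m N J" N \<pi>]
    unfolding valid_election_def by (intro exists_fractional_veto) simp_all
  then have "\<exists>a. a \<in> A \<and> (\<exists>V. fractional_veto N A (\<lambda>i. position m (\<pi> i)) ?s V a)" by blast
  then show ?thesis unfolding veto_rule_def by (rule someI_ex)
qed

section \<open>Distortion\<close>

lemma is_metric_on_nonneg: "is_metric_on S d \<Longrightarrow> x \<in> S \<Longrightarrow> y \<in> S \<Longrightarrow> 0 \<le> d x y"
  and is_metric_on_sym: "is_metric_on S d \<Longrightarrow> x \<in> S \<Longrightarrow> y \<in> S \<Longrightarrow> d x y = d y x"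
  and is_metric_on_refl: "is_metric_on S d \<Longrightarrow> x \<in> S \<Longrightarrow> d x x = 0"
  and is_metric_on_triangle:
    "is_metric_on S d \<Longrightarrow> x \<in> S \<Longrightarrow> y \<in> S \<Longrightarrow> z \<in> S \<Longrightarrow> d x z \<le> d x y + d y z"
  unfolding is_metric_on_def by blast+

lemma moderate_sequence_distances:
  assumes "\<alpha> \<le> 1" and "valid_election m N A \<pi>" and d: "is_metric_on (Inl ` N \<union> Inr ` A) d"
    and cons: "alpha_consistent \<alpha> m N \<pi> J d" and "i \<in> N"
    and moderate: "moderate_up_to m k (J i)" and "k \<le> m - 1"
  shows "moderate_sequence \<alpha> m k (\<lambda>l. d (Inl i) (Inr (\<pi> i l)))"
proof -
  let ?x = "\<lambda>l. d (Inl i) (Inr (\<pi> i l))"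
  have "bij_betw (\<pi> i) {1..m} A" using assms(2) \<open>i \<in> N\<close> unfolding valid_election_def by blast
  then have nonneg: "0 \<le> ?x l" if "l \<in> {1..m}" for l
    using is_metric_on_nonneg[OF d] \<open>i \<in> N\<close> that by (simp add: bij_betwE)
  have step: "(\<not> J i l \<longrightarrow> ?x l \<le> ?x (Suc l) \<and> \<alpha> * ?x (Suc l) < ?x l) \<and>
              (J i l \<longrightarrow> ?x l \<le> \<alpha> * ?x (Suc l))" if "l \<in> {1..m-1}" for l
    using cons \<open>i \<in> N\<close> that unfolding alpha_consistent_def by simp
  have "?x l \<le> ?x (Suc l)" if "l \<in> {1..m-1}" for l
  proof (cases "J i l")
    case True
    have "\<alpha> * ?x (Suc l) \<le> ?x (Suc l)"
      using mult_right_mono[OF assms(1) nonneg[of "Suc l"]] that by auto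
    with True step[OF that] show ?thesis by simp
  next
    case False
    with step[OF that] show ?thesis by simp
  qed
  moreover have "\<alpha> * ?x (Suc l) \<le> ?x l" if "l \<in> {1..k}" for l
    using step[of l] moderate that \<open>k \<le> m - 1\<close> unfolding moderate_up_to_def by fastforce
  moreover have "?x (k+1) \<le> \<alpha> * ?x (k+2)" if "k + 1 \<le> m - 1"
    using step[of "k+1"] moderate that unfolding moderate_up_to_def by simp
  ultimately show ?thesis using nonneg unfolding moderate_sequence_def by blast
qed

lemma social_cost_le_by_veto:
  assumes d: "is_metric_on (Inl ` N \<union> Inr ` A) d"
    and V: "fractional_veto N A r s V a" and "b \<in> A"
    and closer: "\<And>i c. i \<in> N \<Longrightarrow> c \<in> A \<Longrightarrow> r i a \<le> r i c \<Longrightarrow> d (Inl i) (Inr a) \<le> d (Inl i) (Inr c)"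
  shows "social_cost N d a \<le> social_cost N d b + (\<Sum>c\<in>A. s c * d (Inr b) (Inr c))"
proof -
  have V_nonneg: "\<forall>i\<in>N. \<forall>c\<in>A. 0 \<le> V i c" and V_row: "\<forall>i\<in>N. sum (V i) A = 1"
    and V_col: "\<forall>c\<in>A. (\<Sum>i\<in>N. V i c) = s c"
    and V_veto: "\<forall>i\<in>N. \<forall>c\<in>A. 0 < V i c \<longrightarrow> r i a \<le> r i c"
    using V unfolding fractional_veto_def by blast+
  have detour: "V i c * d (Inl i) (Inr a) \<le> V i c * (d (Inl i) (Inr b) + d (Inr b) (Inr c))"
    if "i \<in> N" "c \<in> A" for i c
  proof (cases "V i c = 0")
    case False
    with V_nonneg that have "0 < V i c" by force
    then have "d (Inl i) (Inr a) \<le> d (Inl i) (Inr c)" using closer V_veto that by blast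
    also have "\<dots> \<le> d (Inl i) (Inr b) + d (Inr b) (Inr c)"
      using is_metric_on_triangle[OF d] that \<open>b \<in> A\<close> by blast
    finally show ?thesis using \<open>0 < V i c\<close> by (intro mult_left_mono) auto
  qed simp
  have "social_cost N d a = (\<Sum>i\<in>N. \<Sum>c\<in>A. V i c * d (Inl i) (Inr a))"
    unfolding social_cost_def using V_row by (intro sum.cong) (simp_all flip: sum_distrib_right)
  also have "\<dots> \<le> (\<Sum>i\<in>N. \<Sum>c\<in>A. V i c * (d (Inl i) (Inr b) + d (Inr b) (Inr c)))"
    using detour by (intro sum_mono) auto
  also have "\<dots> = (\<Sum>i\<in>N. sum (V i) A * d (Inl i) (Inr b)) + (\<Sum>i\<in>N. \<Sum>c\<in>A. V i c * d (Inr b) (Inr c))"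
    by (simp add: distrib_left sum.distrib sum_distrib_right)
  also have "\<dots> = (\<Sum>i\<in>N. d (Inl i) (Inr b)) + (\<Sum>c\<in>A. (\<Sum>i\<in>N. V i c) * d (Inr b) (Inr c))"
    using V_row by (simp add: sum_distrib_right sum.swap[of _ N A])
  also have "\<dots> = social_cost N d b + (\<Sum>c\<in>A. s c * d (Inr b) (Inr c))"
    unfolding social_cost_def using V_col by simp
  finally show ?thesis .
qed

lemma weighted_distance_le_agent_distance:
  assumes "0 \<le> \<alpha>" and "\<alpha> \<le> 1" and "k + 1 \<le> m" and bij: "bij_betw (\<pi> i) {1..m} A"
    and d: "is_metric_on (Inl ` N \<union> Inr ` A) d" and "i \<in> N" and "b \<in> A"
    and moderate: "moderate_sequence \<alpha> m k (\<lambda>l. d (Inl i) (Inr (\<pi> i l)))"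
  shows "(\<Sum>c\<in>A. rank_weight \<alpha> k (position m (\<pi> i) c) * d (Inr b) (Inr c))
         \<le> (1 + max \<alpha> (t_ext \<alpha> k)) * d (Inl i) (Inr b)"
proof -
  define x where "x l = d (Inl i) (Inr (\<pi> i l))" for l
  define p where "p = position m (\<pi> i) b"
  have p: "p \<in> {1..m}" "\<pi> i p = b"
    unfolding p_def using position_in[OF bij] ranking_position[OF bij] \<open>b \<in> A\<close> by auto
  have "d (Inr b) (Inr (\<pi> i l)) \<le> (if l = p then 0 else x p + x l)" if "l \<in> {1..m}" for l
  proof -
    have "\<pi> i l \<in> A" using bij that by (simp add: bij_betwE)
    then show ?thesis
      using is_metric_on_triangle[OF d, of "Inr b" "Inl i" "Inr (\<pi> i l)"]
        is_metric_on_sym[OF d, of "Inr b" "Inl i"] is_metric_on_refl[OF d, of "Inr b"]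
        \<open>i \<in> N\<close> \<open>b \<in> A\<close> p unfolding x_def by auto
  qed
  then have "(\<Sum>l=1..m. rank_weight \<alpha> k l * d (Inr b) (Inr (\<pi> i l)))
      \<le> (\<Sum>l=1..m. rank_weight \<alpha> k l * (if l = p then 0 else x p + x l))"
    using rank_weight_nonneg[OF assms(1,2)] by (intro sum_mono mult_left_mono) auto
  also have "\<dots> \<le> (1 + max \<alpha> (t_ext \<alpha> k)) * x p"
    using sum_rank_weight_detour_le[OF assms(1-3)] moderate p unfolding x_def by blast
  finally show ?thesis
    using sum_by_position[OF bij, of "\<lambda>l c. rank_weight \<alpha> k l * d (Inr b) (Inr c)"] p
    unfolding x_def by simp
qed

lemma score_weighted_distance_le:
  assumes "0 \<le> \<alpha>" and "\<alpha> \<le> 1" and valid: "valid_election m N A \<pi>" and "k + 1 \<le> m"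
    and "is_metric_on (Inl ` N \<union> Inr ` A) d" and "b \<in> A"
    and x: "\<forall>i\<in>N. moderate_sequence \<alpha> m k (\<lambda>l. d (Inl i) (Inr (\<pi> i l)))"
  shows "(\<Sum>c\<in>A. score \<alpha> m k N \<pi> c * d (Inr b) (Inr c))
         \<le> (1 + max \<alpha> (t_ext \<alpha> k)) * social_cost N d b"
proof -
  have "(\<Sum>c\<in>A. score \<alpha> m k N \<pi> c * d (Inr b) (Inr c))
      = (\<Sum>i\<in>N. \<Sum>c\<in>A. rank_weight \<alpha> k (position m (\<pi> i) c) * d (Inr b) (Inr c))"
    unfolding score_def by (simp add: sum_distrib_right sum.swap[of _ A N])
  also have "\<dots> \<le> (\<Sum>i\<in>N. (1 + max \<alpha> (t_ext \<alpha> k)) * d (Inl i) (Inr b))"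
    using valid x assms(1,2,4-6) unfolding valid_election_def
    by (intro sum_mono weighted_distance_le_agent_distance) auto
  finally show ?thesis unfolding social_cost_def by (simp add: sum_distrib_left)
qed

lemma veto_rule_social_cost_le:
  assumes "2 \<le> m" and "0 \<le> \<alpha>" and "\<alpha> \<le> 1" and valid: "valid_election m N A \<pi>"
    and k: "k \<in> {1..m-1}" and moderate: "\<forall>i\<in>N. moderate_up_to m k (J i)"
    and d: "is_metric_on (Inl ` N \<union> Inr ` A) d" and cons: "alpha_consistent \<alpha> m N \<pi> J d"
    and "b \<in> A"
  shows "social_cost N d (veto_rule \<alpha> m N A \<pi> J) \<le> (2 + max \<alpha> (t_ext \<alpha> k)) * social_cost N d b"
proof -
  let ?a = "veto_rule \<alpha> m N A \<pi> J"
  have bij: "\<And>i. i \<in> N \<Longrightarrow> bij_betw (\<pi> i) {1..m} A" and "N \<noteq> {}"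
    using valid unfolding valid_election_def by auto
  have x: "\<forall>i\<in>N. moderate_sequence \<alpha> m k (\<lambda>l. d (Inl i) (Inr (\<pi> i l)))"
    using moderate_sequence_distances[OF assms(3) valid d cons] moderate k by auto
  obtain V where "?a \<in> A"
    and V: "fractional_veto N A (\<lambda>i. position m (\<pi> i)) (score \<alpha> m k N \<pi>) V ?a"
    using veto_rule_spec[OF assms(1-3) valid, of J] moderation_level_eq[OF \<open>N \<noteq> {}\<close> k moderate] by auto
  have closer: "d (Inl i) (Inr ?a) \<le> d (Inl i) (Inr c)"
    if "i \<in> N" "c \<in> A" "position m (\<pi> i) ?a \<le> position m (\<pi> i) c" for i c
    using moderate_sequence_mono[OF x[rule_format, OF \<open>i \<in> N\<close>] _ that(3)]
      position_in[OF bij] ranking_position[OF bij] that \<open>?a \<in> A\<close> by force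
  have "social_cost N d ?a \<le> social_cost N d b + (\<Sum>c\<in>A. score \<alpha> m k N \<pi> c * d (Inr b) (Inr c))"
    by (rule social_cost_le_by_veto[OF d V \<open>b \<in> A\<close> closer])
  also have "\<dots> \<le> social_cost N d b + (1 + max \<alpha> (t_ext \<alpha> k)) * social_cost N d b"
    using score_weighted_distance_le[OF assms(2,3) valid _ d \<open>b \<in> A\<close> x] k by auto
  finally show ?thesis by (simp add: algebra_simps)
qed

(* An optimal social cost of 0 makes the ratio x / 0 = 0, harmless for an upper bound. *)
lemma distortion_le:
  assumes "finite A" and "A \<noteq> {}" and "0 \<le> C"
    and bound: "\<And>d b. is_metric_on (Inl ` N \<union> Inr ` A) d \<Longrightarrow> alpha_consistent \<alpha> m N \<pi> J d \<Longrightarrow> b \<in> A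
                  \<Longrightarrow> social_cost N d a \<le> C * social_cost N d b"
  shows "distortion \<alpha> m N A \<pi> J a \<le> ereal C"
  unfolding distortion_def
proof (rule SUP_least, clarify)
  fix d assume d: "is_metric_on (Inl ` N \<union> Inr ` A) d" and cons: "alpha_consistent \<alpha> m N \<pi> J d"
  have "(MIN b\<in>A. social_cost N d b) \<in> social_cost N d ` A" using assms(1,2) by (intro Min_in) auto
  then obtain b where "b \<in> A" and b_min: "(MIN b\<in>A. social_cost N d b) = social_cost N d b"
    by auto
  have "0 \<le> social_cost N d b"
    unfolding social_cost_def using is_metric_on_nonneg[OF d] \<open>b \<in> A\<close> by (intro sum_nonneg) auto
  moreover have "social_cost N d a \<le> C * social_cost N d b" by (rule bound[OF d cons \<open>b \<in> A\<close>])
  ultimately have "social_cost N d a / social_cost N d b \<le> C"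
    using \<open>0 \<le> C\<close> by (cases "social_cost N d b = 0") (simp_all add: pos_divide_le_eq)
  then show "ereal (social_cost N d a / (MIN b\<in>A. social_cost N d b)) \<le> ereal C"
    unfolding b_min by simp
qed

theorem theorem2:
  fixes m :: nat and \<alpha> :: real
  assumes "m \<ge> 2" and "0 \<le> \<alpha>" and "\<alpha> \<le> 1"
  shows "\<exists>f :: 'n set \<Rightarrow> 'a set \<Rightarrow> ('n \<Rightarrow> nat \<Rightarrow> 'a) \<Rightarrow> ('n \<Rightarrow> nat \<Rightarrow> bool) \<Rightarrow> 'a.
           (\<forall>N A prf J. valid_election m N A prf \<longrightarrow> f N A prf J \<in> A) \<and>
           (\<forall>k \<in> {1..m-1}. \<forall>N A prf J.
              valid_election m N A prf \<longrightarrow> (\<forall>i\<in>N. moderate_up_to m k (J i)) \<longrightarrow>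
              distortion \<alpha> m N A prf J (f N A prf J) \<le> ereal (2 + max \<alpha> (t_seq \<alpha> k)))"
proof (intro exI[of _ "veto_rule \<alpha> m"] conjI allI ballI impI)
  fix N :: "'n set" and A :: "'a set" and \<pi> J
  assume "valid_election m N A \<pi>"
  then show "veto_rule \<alpha> m N A \<pi> J \<in> A" using veto_rule_spec[OF assms] by blast
next
  fix k and N :: "'n set" and A :: "'a set" and \<pi> J
  assume k: "k \<in> {1..m-1}" and valid: "valid_election m N A \<pi>"
    and moderate: "\<forall>i\<in>N. moderate_up_to m k (J i)"
  have "t_seq \<alpha> k = t_ext \<alpha> k" using t_seq_eq_t_ext assms(2) k by simp
  moreover have "distortion \<alpha> m N A \<pi> J (veto_rule \<alpha> m N A \<pi> J) \<le> ereal (2 + max \<alpha> (t_ext \<alpha> k))"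
    using valid assms veto_rule_social_cost_le[OF assms valid k moderate]
    unfolding valid_election_def by (intro distortion_le) auto
  ultimately show "distortion \<alpha> m N A \<pi> J (veto_rule \<alpha> m N A \<pi> J) \<le> ereal (2 + max \<alpha> (t_seq \<alpha> k))"
    by simp
qed

end
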